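(* For every admissible triple $(j_1,j_2,j_3)\in\mathbf J$, the top total-degree part of the Laurent polynomial $\phi_{j_1,j_2,j_3}$ (total degree of $x_{12}^{a}x_{13}^{b}x_{23}^{c}$ being $a+b+c$) has total degree $(j_1+j_2+j_3)/2$ and consists of a single monomial $c\,x_{12}^{d_3}x_{13}^{d_2}x_{23}^{d_1}$ with $c\in\mathbb C\setminus\{0\}$, where $$d_1=\frac{-j_1+j_2+j_3}{2},\quad d_2=\frac{j_1-j_2+j_3}{2},\quad d_3=\frac{j_1+j_2-j_3}{2}.$$
   Context: A triple $(j_1,j_2,j_3)$ of nonnegative integers is admissible if $|j_1-j_2|\le j_3\le j_1+j_2$ and $j_1+j_2+j_3$ is even; $\mathbf J$ denotes the set of admissible triples. Let $\mathcal H=\mathbb C[x_{12}+x_{12}^{-1},x_{13}+x_{13}^{-1},x_{23}+x_{23}^{-1}]\subset\mathbb C[x_{12}^{\pm1},x_{13}^{\pm1},x_{23}^{\pm1}]$. For $a,b\in\{\pm1\}$ set $K_{a,b}(j_1,j_2,j_3)=ab\,\frac{(aj_1+bj_2+j_3+a+b+2)(aj_1+bj_2-j_3+a+b)}{4(j_1+1)(j_2+1)}$. The genus two Schur polynomials $(\phi_{j_1,j_2,j_3})_{(j_1,j_2,j_3)\in\mathbf J}$ are the unique family in $\mathcal H$ with $\phi_{0,0,0}=1$ such that for all admissible $(j_1,j_2,j_3)$: $(x_{12}+x_{12}^{-1})\phi_{j_1,j_2,j_3}=\sum_{a,b\in\{\pm1\}}K_{a,b}(j_1,j_2,j_3)\phi_{j_1+a,j_2+b,j_3}$,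 $(x_{13}+x_{13}^{-1})\phi_{j_1,j_2,j_3}=\sum_{a,b\in\{\pm1\}}K_{a,b}(j_1,j_3,j_2)\phi_{j_1+a,j_2,j_3+b}$, $(x_{23}+x_{23}^{-1})\phi_{j_1,j_2,j_3}=\sum_{a,b\in\{\pm1\}}K_{a,b}(j_2,j_3,j_1)\phi_{j_1,j_2+a,j_3+b}$, where $\phi$ of a non-admissible triple is interpreted as $0$. *)

theory Defs
  imports Complex_Main "HOL-Library.Poly_Mapping" "HOL-Library.Product_Plus"
begin

text \<open>Laurent polynomials in x12, x13, x23 over the complex numbers:
  finitely supported maps from exponent triples (a,b,c) (for x12^a x13^b x23^c)
  to coefficients, with convolution product.\<close>
type_synonym lpoly = "(int \<times> int \<times> int) \<Rightarrow>\<^sub>0 complex"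

definition lmono :: "int \<Rightarrow> int \<Rightarrow> int \<Rightarrow> complex \<Rightarrow> lpoly" where
  "lmono a b c k = Poly_Mapping.single (a, b, c) k"

definition lconst :: "complex \<Rightarrow> lpoly" where
  "lconst k = lmono 0 0 0 k"

definition y12 :: lpoly where "y12 = lmono 1 0 0 1 + lmono (-1) 0 0 1"
definition y13 :: lpoly where "y13 = lmono 0 1 0 1 + lmono 0 (-1) 0 1"
definition y23 :: lpoly where "y23 = lmono 0 0 1 1 + lmono 0 0 (-1) 1"

inductive_set H :: "lpoly set" where
  H_const: "lconst k \<in> H"
| H_y12: "y12 \<in> H"
| H_y13: "y13 \<in> H"
| H_y23: "y23 \<in> H"
| H_add: "p \<in> H \<Longrightarrow> q \<in> H \<Longrightarrow> p + q \<in> H"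
| H_mult: "p \<in> H \<Longrightarrow> q \<in> H \<Longrightarrow> p * q \<in> H"

definition admissible :: "int \<Rightarrow> int \<Rightarrow> int \<Rightarrow> bool" where
  "admissible j1 j2 j3 \<longleftrightarrow> 0 \<le> j1 \<and> 0 \<le> j2 \<and> 0 \<le> j3 \<and>
     \<bar>j1 - j2\<bar> \<le> j3 \<and> j3 \<le> j1 + j2 \<and> even (j1 + j2 + j3)"

definition K :: "int \<Rightarrow> int \<Rightarrow> int \<Rightarrow> int \<Rightarrow> int \<Rightarrow> complex" where
  "K a b j1 j2 j3 = of_int (a * b) *
     (of_int (a*j1 + b*j2 + j3 + a + b + 2) * of_int (a*j1 + b*j2 - j3 + a + b))
     / (4 * of_int (j1 + 1) * of_int (j2 + 1))"

definition schur_family :: "(int \<Rightarrow> int \<Rightarrow> int \<Rightarrow> lpoly) \<Rightarrow> bool" where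
  "schur_family phi \<longleftrightarrow>
     phi 0 0 0 = 1 \<and>
     (\<forall>j1 j2 j3. admissible j1 j2 j3 \<longrightarrow> phi j1 j2 j3 \<in> H) \<and>
     (\<forall>j1 j2 j3. \<not> admissible j1 j2 j3 \<longrightarrow> phi j1 j2 j3 = 0) \<and>
     (\<forall>j1 j2 j3. admissible j1 j2 j3 \<longrightarrow>
        y12 * phi j1 j2 j3 =
          (\<Sum>a\<in>{-1,1}. \<Sum>b\<in>{-1,1}. lconst (K a b j1 j2 j3) * phi (j1+a) (j2+b) j3) \<and>
        y13 * phi j1 j2 j3 =
          (\<Sum>a\<in>{-1,1}. \<Sum>b\<in>{-1,1}. lconst (K a b j1 j3 j2) * phi (j1+a) j2 (j3+b)) \<and>
        y23 * phi j1 j2 j3 =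
          (\<Sum>a\<in>{-1,1}. \<Sum>b\<in>{-1,1}. lconst (K a b j2 j3 j1) * phi j1 (j2+a) (j3+b)))"

end

theory Submission
  imports Defs
begin

(*
  Put d1 = h - j1, d2 = h - j2, d3 = h - j3 where j1 + j2 + j3 = 2h; the triple is admissible
  iff all d_i >= 0. A nonzero admissible triple has some d_i >= 1, say d3, and then
  (j1-1, j2-1, j3) is admissible too. Its x12-recursion
    (x12 + 1/x12) phi(j1-1,j2-1,j3) = K_{1,1} phi(j1,j2,j3) + (phi(t) with t1+t2+t3 < 2h)
  has K_{1,1} /= 0. By induction on h, the other terms on the right have total degree < h,
  while the left side has the single monomial x12 * (top monomial of phi(j1-1,j2-1,j3)) in
  degree h; hence so does phi(j1,j2,j3).
*)

lemma lookup_single_mult: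
  fixes p :: "'a::ab_group_add \<Rightarrow>\<^sub>0 'b::semiring_0"
  shows "Poly_Mapping.lookup (Poly_Mapping.single e c * p) k = c * Poly_Mapping.lookup p (k - e)"
proof -
  have "Poly_Mapping.lookup (Poly_Mapping.single e c * p) k
      = (\<Sum>l. (c * (\<Sum>q. Poly_Mapping.lookup p q when k = l + q)) when e = l)"
    by (simp add: lookup_mult lookup_single when_mult)
  also have "\<dots> = c * (\<Sum>q. Poly_Mapping.lookup p q when k = e + q)"
    by simp
  also have "(\<Sum>q. Poly_Mapping.lookup p q when k = e + q) = (\<Sum>q. Poly_Mapping.lookup p q when q = k - e)"
    by (rule Sum_any.cong) (auto intro: when_cong)
  finally show ?thesis by simp
qed

definition tdeg :: "int \<times> int \<times> int \<Rightarrow> int" where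
  "tdeg k = fst k + fst (snd k) + snd (snd k)"

lemma tdeg_add [simp]: "tdeg (k + e) = tdeg k + tdeg e"
  by (cases k; cases e) (simp add: tdeg_def)

lemma tdeg_diff [simp]: "tdeg (k - e) = tdeg k - tdeg e"
  by (cases k; cases e) (simp add: tdeg_def)

definition tdeg_le :: "lpoly \<Rightarrow> int \<Rightarrow> bool" where
  "tdeg_le p s \<longleftrightarrow> (\<forall>k\<in>Poly_Mapping.keys p. tdeg k \<le> s)"

definition is_top_monomial :: "lpoly \<Rightarrow> int \<times> int \<times> int \<Rightarrow> bool" where
  "is_top_monomial p m \<longleftrightarrow> Poly_Mapping.lookup p m \<noteq> 0 \<and>
     (\<forall>k\<in>Poly_Mapping.keys p. tdeg k \<le> tdeg m \<and> (tdeg k = tdeg m \<longrightarrow> k = m))"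

lemma tdeg_le_zero [simp]: "tdeg_le 0 s"
  by (simp add: tdeg_le_def)

lemma tdeg_le_mono: "tdeg_le p s \<Longrightarrow> s \<le> t \<Longrightarrow> tdeg_le p t"
  by (auto simp: tdeg_le_def)

lemma tdeg_le_add: "tdeg_le p s \<Longrightarrow> tdeg_le q s \<Longrightarrow> tdeg_le (p + q) s"
  using keys_add by (fastforce simp: tdeg_le_def)

lemma lookup_lconst_mult [simp]:
  "Poly_Mapping.lookup (lconst c * p) k = c * Poly_Mapping.lookup p k"
  by (simp add: lconst_def lmono_def lookup_single_mult flip: zero_prod_def)

lemma tdeg_le_lconst_mult: "tdeg_le p s \<Longrightarrow> tdeg_le (lconst c * p) s"
  by (simp add: tdeg_le_def in_keys_iff)

lemma tdeg_le_lconst_combination: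
  "tdeg_le p1 s \<Longrightarrow> tdeg_le p2 s \<Longrightarrow> tdeg_le p3 s \<Longrightarrow>
    tdeg_le (lconst c1 * p1 + lconst c2 * p2 + lconst c3 * p3) s"
  by (intro tdeg_le_add tdeg_le_lconst_mult)

lemma is_top_monomial_tdeg_le: "is_top_monomial p m \<Longrightarrow> tdeg_le p (tdeg m)"
  by (simp add: is_top_monomial_def tdeg_le_def)

lemma lookup_eq_zero_if_tdeg_gt: "tdeg_le p s \<Longrightarrow> s < tdeg k \<Longrightarrow> Poly_Mapping.lookup p k = 0"
  unfolding tdeg_le_def by (meson in_keys_iff not_le)

lemma is_top_monomial_shift:
  fixes p q r :: lpoly
  assumes y: "y = Poly_Mapping.single e 1 + Poly_Mapping.single (-e) 1" and e: "tdeg e = 1"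
    and eq: "y * q = lconst c * p + r" and "c \<noteq> 0"
    and q: "is_top_monomial q m" and r: "tdeg_le r (tdeg m)"
  shows "is_top_monomial p (m + e)"
proof -
  have coeff: "c * Poly_Mapping.lookup p k =
      Poly_Mapping.lookup q (k - e) + Poly_Mapping.lookup q (k + e) - Poly_Mapping.lookup r k" for k
  proof -
    have "Poly_Mapping.lookup (y * q) k = Poly_Mapping.lookup (lconst c * p + r) k"
      using eq by simp
    then show ?thesis
      by (simp add: y distrib_right lookup_add lookup_single_mult)
  qed
  have q_above: "Poly_Mapping.lookup q k = 0" if "tdeg m < tdeg k" for k
    using q that lookup_eq_zero_if_tdeg_gt is_top_monomial_tdeg_le by blast
  have q_level: "Poly_Mapping.lookup q k = 0" if "tdeg k = tdeg m" "k \<noteq> m" for k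
    using q that by (auto simp: is_top_monomial_def in_keys_iff)
  have r_above: "Poly_Mapping.lookup r k = 0" if "tdeg m < tdeg k" for k
    using r that by (rule lookup_eq_zero_if_tdeg_gt)
  have "c * Poly_Mapping.lookup p (m + e) = Poly_Mapping.lookup q m"
    using coeff[of "m + e"] q_above[of "m + e + e"] r_above[of "m + e"] e by simp
  then have top: "Poly_Mapping.lookup p (m + e) \<noteq> 0"
    using q by (auto simp: is_top_monomial_def)
  have "c * Poly_Mapping.lookup p k = 0"
    if "tdeg m + 1 < tdeg k \<or> (tdeg k = tdeg m + 1 \<and> k \<noteq> m + e)" for k
    using that coeff[of k] q_above[of "k - e"] q_level[of "k - e"] q_above[of "k + e"] r_above[of k] e
    by (auto simp: algebra_simps)
  then have "tdeg k \<le> tdeg m + 1 \<and> (tdeg k = tdeg m + 1 \<longrightarrow> k = m + e)"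
    if "k \<in> Poly_Mapping.keys p" for k
    using that \<open>c \<noteq> 0\<close> by (metis in_keys_iff mult_eq_0_iff linorder_not_le)
  with top e show ?thesis by (simp add: is_top_monomial_def)
qed

lemma admissible_sum_evenE:
  assumes "admissible j1 j2 j3"
  obtains h where "j1 + j2 + j3 = 2 * h"
  using assms unfolding admissible_def by (meson evenE)

lemma admissible_iff_le_half:
  "j1 + j2 + j3 = 2 * h \<Longrightarrow> admissible j1 j2 j3 \<longleftrightarrow> j1 \<le> h \<and> j2 \<le> h \<and> j3 \<le> h"
  by (auto simp: admissible_def abs_le_iff)

lemma admissible_predecessor_cases:
  assumes "admissible j1 j2 j3" and "(j1, j2, j3) \<noteq> (0, 0, 0)"
  obtains (pred12) "admissible (j1 - 1) (j2 - 1) j3" | (pred13) "admissible (j1 - 1) j2 (j3 - 1)"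
    | (pred23) "admissible j1 (j2 - 1) (j3 - 1)"
proof -
  obtain h where h: "j1 + j2 + j3 = 2 * h"
    using assms(1) by (rule admissible_sum_evenE)
  then have "j1 \<le> h" "j2 \<le> h" "j3 \<le> h"
    using assms(1) by (simp_all add: admissible_iff_le_half)
  moreover have "\<not> (j1 = h \<and> j2 = h \<and> j3 = h)"
    using h assms(2) by auto
  ultimately show ?thesis
    using that h by (simp add: admissible_iff_le_half[of _ _ _ "h - 1"]) linarith
qed

definition top_exponent :: "int \<Rightarrow> int \<Rightarrow> int \<Rightarrow> int \<times> int \<times> int" where
  "top_exponent j1 j2 j3 = ((j1 + j2 - j3) div 2, (j1 - j2 + j3) div 2, (- j1 + j2 + j3) div 2)"

lemma top_exponent_eq: "j1 + j2 + j3 = 2 * h \<Longrightarrow> top_exponent j1 j2 j3 = (h - j3, h - j2, h - j1)"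
proof -
  assume "j1 + j2 + j3 = 2 * h"
  then have "j1 + j2 - j3 = 2 * (h - j3)" "j1 - j2 + j3 = 2 * (h - j2)" "- j1 + j2 + j3 = 2 * (h - j1)"
    by simp_all
  then show ?thesis
    unfolding top_exponent_def by (simp only:) simp
qed

lemma tdeg_top_exponent: "j1 + j2 + j3 = 2 * h \<Longrightarrow> tdeg (top_exponent j1 j2 j3) = h"
  by (simp add: top_exponent_eq tdeg_def)

lemma K_1_1_neq_zero: "0 \<le> a \<Longrightarrow> 0 \<le> b \<Longrightarrow> 0 \<le> c \<Longrightarrow> c \<le> a + b \<Longrightarrow> K 1 1 a b c \<noteq> 0"
  unfolding K_def by (simp only: divide_eq_0_iff mult_eq_0_iff of_int_eq_0_iff de_Morgan_disj) simp

lemma y12_eq: "y12 = Poly_Mapping.single (1, 0, 0) 1 + Poly_Mapping.single (- (1, 0, 0)) 1"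
  by (simp add: y12_def lmono_def)

lemma y13_eq: "y13 = Poly_Mapping.single (0, 1, 0) 1 + Poly_Mapping.single (- (0, 1, 0)) 1"
  by (simp add: y13_def lmono_def)

lemma y23_eq: "y23 = Poly_Mapping.single (0, 0, 1) 1 + Poly_Mapping.single (- (0, 0, 1)) 1"
  by (simp add: y23_def lmono_def)

lemma schur_family_raise12:
  assumes "schur_family phi" and "admissible (j1 - 1) (j2 - 1) j3"
  shows "y12 * phi (j1 - 1) (j2 - 1) j3 = lconst (K 1 1 (j1 - 1) (j2 - 1) j3) * phi j1 j2 j3 +
     (lconst (K (-1) (-1) (j1 - 1) (j2 - 1) j3) * phi (j1 - 2) (j2 - 2) j3 +
      lconst (K (-1) 1 (j1 - 1) (j2 - 1) j3) * phi (j1 - 2) j2 j3 +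
      lconst (K 1 (-1) (j1 - 1) (j2 - 1) j3) * phi j1 (j2 - 2) j3)"
  using assms unfolding schur_family_def by (simp add: algebra_simps)

lemma schur_family_raise13:
  assumes "schur_family phi" and "admissible (j1 - 1) j2 (j3 - 1)"
  shows "y13 * phi (j1 - 1) j2 (j3 - 1) = lconst (K 1 1 (j1 - 1) (j3 - 1) j2) * phi j1 j2 j3 +
     (lconst (K (-1) (-1) (j1 - 1) (j3 - 1) j2) * phi (j1 - 2) j2 (j3 - 2) +
      lconst (K (-1) 1 (j1 - 1) (j3 - 1) j2) * phi (j1 - 2) j2 j3 +
      lconst (K 1 (-1) (j1 - 1) (j3 - 1) j2) * phi j1 j2 (j3 - 2))"
  using assms unfolding schur_family_def by (simp add: algebra_simps)

lemma schur_family_raise23: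
  assumes "schur_family phi" and "admissible j1 (j2 - 1) (j3 - 1)"
  shows "y23 * phi j1 (j2 - 1) (j3 - 1) = lconst (K 1 1 (j2 - 1) (j3 - 1) j1) * phi j1 j2 j3 +
     (lconst (K (-1) (-1) (j2 - 1) (j3 - 1) j1) * phi j1 (j2 - 2) (j3 - 2) +
      lconst (K (-1) 1 (j2 - 1) (j3 - 1) j1) * phi j1 (j2 - 2) j3 +
      lconst (K 1 (-1) (j2 - 1) (j3 - 1) j1) * phi j1 j2 (j3 - 2))"
  using assms unfolding schur_family_def by (simp add: algebra_simps)

lemma schur_family_tdeg_le:
  assumes "schur_family phi"
    and top: "\<And>t1 t2 t3. admissible t1 t2 t3 \<Longrightarrow> t1 + t2 + t3 \<le> 2 * g \<Longrightarrow>
      is_top_monomial (phi t1 t2 t3) (top_exponent t1 t2 t3)"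
    and sum: "t1 + t2 + t3 \<le> 2 * g"
  shows "tdeg_le (phi t1 t2 t3) g"
proof (cases "admissible t1 t2 t3")
  case True
  then obtain f where f: "t1 + t2 + t3 = 2 * f"
    by (rule admissible_sum_evenE)
  have "tdeg_le (phi t1 t2 t3) (tdeg (top_exponent t1 t2 t3))"
    using True sum by (intro is_top_monomial_tdeg_le top)
  then show ?thesis
    using f sum by (auto simp: tdeg_top_exponent intro: tdeg_le_mono)
next
  case False
  then show ?thesis
    using assms(1) by (simp add: schur_family_def)
qed

lemma schur_family_top_step:
  assumes S: "schur_family phi" and adm: "admissible j1 j2 j3" and h: "j1 + j2 + j3 = 2 * h"
    and nonzero: "(j1, j2, j3) \<noteq> (0, 0, 0)"
    and top: "\<And>t1 t2 t3. admissible t1 t2 t3 \<Longrightarrow> t1 + t2 + t3 \<le> 2 * (h - 1) \<Longrightarrow>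
      is_top_monomial (phi t1 t2 t3) (top_exponent t1 t2 t3)"
  shows "is_top_monomial (phi j1 j2 j3) (top_exponent j1 j2 j3)"
proof -
  have lower: "tdeg_le (phi t1 t2 t3) (h - 1)" if "t1 + t2 + t3 \<le> 2 * (h - 1)" for t1 t2 t3
    using S top that by (rule schur_family_tdeg_le)
  have shift: "is_top_monomial (phi j1 j2 j3) (top_exponent j1 j2 j3)"
    if "y * phi a1 a2 a3 = lconst c * phi j1 j2 j3 + r"
      and "y = Poly_Mapping.single e 1 + Poly_Mapping.single (-e) 1" and "tdeg e = 1"
      and "c \<noteq> 0" and "admissible a1 a2 a3" and "a1 + a2 + a3 = 2 * (h - 1)"
      and "top_exponent a1 a2 a3 + e = top_exponent j1 j2 j3" and "tdeg_le r (h - 1)"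
    for y e c r a1 a2 a3
  proof -
    have "tdeg (top_exponent a1 a2 a3) = h - 1"
      using that by (intro tdeg_top_exponent)
    with that show ?thesis
      using is_top_monomial_shift[OF that(2,3,1,4) top[OF that(5)]] by simp
  qed
  from adm nonzero show ?thesis
  proof (cases rule: admissible_predecessor_cases)
    case pred12
    show ?thesis
    proof (rule shift[OF schur_family_raise12[OF S pred12] y12_eq _ _ pred12])
      show "K 1 1 (j1 - 1) (j2 - 1) j3 \<noteq> 0"
        using pred12 by (intro K_1_1_neq_zero) (auto simp: admissible_def)
    qed (use h in \<open>simp_all add: tdeg_def top_exponent_eq[of _ _ _ "h - 1"] top_exponent_eq[OF h]
      tdeg_le_lconst_combination lower\<close>)
  next
    case pred13
    show ?thesis
    proof (rule shift[OF schur_family_raise13[OF S pred13] y13_eq _ _ pred13])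
      show "K 1 1 (j1 - 1) (j3 - 1) j2 \<noteq> 0"
        using pred13 by (intro K_1_1_neq_zero) (auto simp: admissible_def)
    qed (use h in \<open>simp_all add: tdeg_def top_exponent_eq[of _ _ _ "h - 1"] top_exponent_eq[OF h]
      tdeg_le_lconst_combination lower\<close>)
  next
    case pred23
    show ?thesis
    proof (rule shift[OF schur_family_raise23[OF S pred23] y23_eq _ _ pred23])
      show "K 1 1 (j2 - 1) (j3 - 1) j1 \<noteq> 0"
        using pred23 by (intro K_1_1_neq_zero) (auto simp: admissible_def)
    qed (use h in \<open>simp_all add: tdeg_def top_exponent_eq[of _ _ _ "h - 1"] top_exponent_eq[OF h]
      tdeg_le_lconst_combination lower\<close>)
  qed
qed

lemma schur_family_is_top_monomial:
  assumes S: "schur_family phi" and "admissible j1 j2 j3"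
  shows "is_top_monomial (phi j1 j2 j3) (top_exponent j1 j2 j3)"
  using assms(2)
proof (induction "nat (j1 + j2 + j3)" arbitrary: j1 j2 j3 rule: less_induct)
  case less
  obtain h where h: "j1 + j2 + j3 = 2 * h"
    using less.prems by (rule admissible_sum_evenE)
  show ?case
  proof (cases "(j1, j2, j3) = (0, 0, 0)")
    case True
    then have "j1 = 0" "j2 = 0" "j3 = 0"
      by simp_all
    then show ?thesis
      using S by (simp add: schur_family_def is_top_monomial_def top_exponent_def flip: zero_prod_def)
  next
    case False
    show ?thesis
    proof (rule schur_family_top_step[OF S less.prems h False])
      fix t1 t2 t3
      assume "admissible t1 t2 t3" and "t1 + t2 + t3 \<le> 2 * (h - 1)"
      then show "is_top_monomial (phi t1 t2 t3) (top_exponent t1 t2 t3)"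
        using h by (intro less.hyps) (auto simp: admissible_def)
    qed
  qed
qed

theorem mainTheorem5:
  fixes phi :: "int \<Rightarrow> int \<Rightarrow> int \<Rightarrow> lpoly"
    and j1 j2 j3 :: int
  assumes "schur_family phi"
    and "admissible j1 j2 j3"
  shows "Poly_Mapping.lookup (phi j1 j2 j3) ((j1 + j2 - j3) div 2, (j1 - j2 + j3) div 2, (- j1 + j2 + j3) div 2) \<noteq> 0
    \<and> (\<forall>a b c. (a, b, c) \<in> Poly_Mapping.keys (phi j1 j2 j3) \<longrightarrow>
          2 * (a + b + c) \<le> j1 + j2 + j3 \<and>
          (2 * (a + b + c) = j1 + j2 + j3 \<longrightarrow>
             (a, b, c) = ((j1 + j2 - j3) div 2, (j1 - j2 + j3) div 2, (- j1 + j2 + j3) div 2)))"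
proof -
  obtain h where h: "j1 + j2 + j3 = 2 * h"
    using assms(2) by (rule admissible_sum_evenE)
  have "is_top_monomial (phi j1 j2 j3) (top_exponent j1 j2 j3)"
    using assms by (rule schur_family_is_top_monomial)
  moreover have "tdeg (top_exponent j1 j2 j3) = h"
    using h by (rule tdeg_top_exponent)
  ultimately have "Poly_Mapping.lookup (phi j1 j2 j3) (top_exponent j1 j2 j3) \<noteq> 0"
    and "\<forall>k\<in>Poly_Mapping.keys (phi j1 j2 j3). tdeg k \<le> h \<and> (tdeg k = h \<longrightarrow> k = top_exponent j1 j2 j3)"
    unfolding is_top_monomial_def by simp_all
  then show ?thesis
    unfolding top_exponent_def tdeg_def h by auto
qed

end
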